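(* Let $\mathcal{X}_1,\mathcal{X}_2$ be non-empty sets, $\mathcal{B}_1\subseteq\mathcal{P}(\mathcal{X}_1)\setminus\{\emptyset\}$, $\mathcal{B}_2\subseteq\mathcal{P}(\mathcal{X}_2)\setminus\{\emptyset\}$, and for $i\in\{1,2\}$ let $\underline{P}_i$ be a coherent conditional lower prevision on $\mathcal{C}_i\subseteq\mathcal{C}(\mathcal{X}_i)$ with natural extension $\underline{E}_i$ to $\mathcal{C}(\mathcal{X}_i)$. Let $\{i,j\}=\{1,2\}$. Then for any $f\in\mathcal{G}(\mathcal{X}_i)$, any $h\in\mathcal{G}(\mathcal{X}_j)$ and any $\mathcal{B}_i$-measurable $g\in\mathcal{G}_{\geq0}(\mathcal{X}_i)$, $$(\underline{P}_1\otimes\underline{P}_2)(f+gh)=\underline{E}_i\big(f+g\,\underline{E}_j(h)\big).$$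
   Context: Gambles on a non-empty set $\mathcal{X}$ are bounded real functions; $\mathcal{G}(\mathcal{X})$, $\mathcal{G}_{\geq0}(\mathcal{X})$, $\mathcal{G}_{>0}(\mathcal{X})$ denote all gambles, non-negative gambles, non-negative non-zero gambles. For $\mathcal{A}\subseteq\mathcal{G}(\mathcal{X})$: $\mathrm{posi}(\mathcal{A}):=\{\sum_{i=1}^n\lambda_if_i\colon n\in\mathbb{N},\lambda_i>0,f_i\in\mathcal{A}\}$, $\mathcal{E}(\mathcal{A}):=\mathrm{posi}(\mathcal{A}\cup\mathcal{G}_{>0}(\mathcal{X}))$. A coherent set of desirable gambles $\mathcal{D}\subseteq\mathcal{G}(\mathcal{X})$ satisfies: (D1) $f\geq0,f\neq0\Rightarrow f\in\mathcal{D}$; (D2) $f\in\mathcal{D},\lambda>0\Rightarrow\lambda f\in\mathcal{D}$; (D3) $f,g\in\mathcal{D}\Rightarrow f+g\in\mathcal{D}$; (D4) $f\leq0\Rightarrow f\notin\mathcal{D}$. $\mathcal{C}(\mathcal{X}):=\mathcal{G}(\mathcal{X})\times(\mathcal{P}(\mathcal{X})\setminus\{\emptyset\})$; a conditional lower prevision on $\mathcal{C}\subseteq\mathcal{C}(\mathcal{X})$ is a map $(f,B)\mapsto\underline{P}(f\vert B)\in\mathbb{R}\cup\{\pm\infty\}$. For $\mathcal{D}\subseteq\mathcal{G}(\mathcal{X})$, $\underline{P}_{\mathcal{D}}(f\vert B):=\sup\{\mu\in\mathbb{R}\colon[f-\mu]\mathbb{I}_B\in\mathcal{D}\}$. $\underline{P}$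 is coherent if $\underline{P}=\underline{P}_{\mathcal{D}}$ on its domain for some coherent set of desirable gambles $\mathcal{D}$. For coherent $\underline{P}$ on $\mathcal{C}$, $\mathcal{E}(\underline{P}):=\mathcal{E}(\{[f-\mu]\mathbb{I}_B\colon(f,B)\in\mathcal{C},\mu<\underline{P}(f\vert B)\})$ and its natural extension is $\underline{E}(f\vert B):=\underline{P}_{\mathcal{E}(\underline{P})}(f\vert B)$ for all $(f,B)\in\mathcal{C}(\mathcal{X})$. Unconditional notation: $\underline{P}(f):=\underline{P}(f\vert\mathcal{X})$. Gambles on $\mathcal{X}_i$ are identified with their cylindrical extensions to $\mathcal{X}_1\times\mathcal{X}_2$, events $B\subseteq\mathcal{X}_1$ with $B\times\mathcal{X}_2$ (similarly for $\mathcal{X}_2$). For coherent sets of desirable gambles $\mathcal{D}_1,\mathcal{D}_2$: $\mathcal{D}_1\otimes\mathcal{D}_2:=\mathcal{E}(\mathcal{A}_{1\to2}\cup\mathcal{A}_{2\to1})$, $\mathcal{A}_{1\to2}:=\{f_2(X_2)\mathbb{I}_{B_1}(X_1)\colon f_2\in\mathcal{D}_2,B_1\in\mathcal{B}_1\cup\{\mathcal{X}_1\}\}$, $\mathcal{A}_{2\to1}:=\{f_1(X_1)\mathbb{I}_{B_2}(X_2)\colon f_1\in\mathcal{D}_1,B_2\in\mathcal{B}_2\cup\{\mathcal{X}_2\}\}$. Then $(\underline{P}_1\otimes\underline{P}_2)(f\vert B):=\underline{P}_{\mathcal{D}}(f\vert B)$ for $(f,B)\in\mathcal{C}(\mathcal{X}_1\times\mathcal{X}_2)$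 with $\mathcal{D}=\mathcal{E}(\underline{P}_1)\otimes\mathcal{E}(\underline{P}_2)$. Measurability: for $\mathcal{B}\subseteq\mathcal{P}(\mathcal{X})\setminus\{\emptyset\}$, $g\in\mathcal{G}_{\geq0}(\mathcal{X})$ is simple $\mathcal{B}$-measurable if $g=c_0+\sum_{k=1}^nc_k\mathbb{I}_{B_k}$ for some $n\in\mathbb{N}\cup\{0\}$, $c_0,\dots,c_n\geq0$, $B_k\in\mathcal{B}$; $g\in\mathcal{G}_{\geq0}(\mathcal{X})$ is $\mathcal{B}$-measurable if there is a sequence of simple $\mathcal{B}$-measurable $g_n\in\mathcal{G}_{\geq0}(\mathcal{X})$ with $\sup|g-g_n|\to0$. *)

theory Defs
  imports Complex_Main "HOL-Library.Extended_Real" "HOL-Library.Indicator_Function"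
begin

text \<open>The possibility space X is modelled as the (non-empty) universe of a type.
  Gambles are bounded real functions on it.\<close>

definition gamble :: "('a \<Rightarrow> real) \<Rightarrow> bool" where
  "gamble f \<longleftrightarrow> (\<exists>M. \<forall>x. \<bar>f x\<bar> \<le> M)"

definition gambles :: "('a \<Rightarrow> real) set" where
  "gambles = {f. gamble f}"

definition nonneg_gambles :: "('a \<Rightarrow> real) set" where
  "nonneg_gambles = {f. gamble f \<and> (\<forall>x. 0 \<le> f x)}"

definition pos_gambles :: "('a \<Rightarrow> real) set" where
  "pos_gambles = {f. gamble f \<and> (\<forall>x. 0 \<le> f x) \<and> f \<noteq> (\<lambda>_. 0)}"

definition posi :: "('a \<Rightarrow> real) set \<Rightarrow> ('a \<Rightarrow> real) set" where
  "posi A = {f. \<exists>n::nat. n \<ge> 1 \<and> (\<exists>lam fs. (\<forall>i<n. lam i > (0::real) \<and> fs i \<in> A)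
                 \<and> f = (\<lambda>x. \<Sum>i<n. lam i * fs i x))}"

definition Ext :: "('a \<Rightarrow> real) set \<Rightarrow> ('a \<Rightarrow> real) set" where
  "Ext A = posi (A \<union> pos_gambles)"

definition coherent_D :: "('a \<Rightarrow> real) set \<Rightarrow> bool" where
  "coherent_D D \<longleftrightarrow> D \<subseteq> gambles
     \<and> (\<forall>f. gamble f \<and> (\<forall>x. f x \<ge> 0) \<and> f \<noteq> (\<lambda>_. 0) \<longrightarrow> f \<in> D)
     \<and> (\<forall>f \<in> D. \<forall>lam::real. lam > 0 \<longrightarrow> (\<lambda>x. lam * f x) \<in> D)
     \<and> (\<forall>f \<in> D. \<forall>g \<in> D. (\<lambda>x. f x + g x) \<in> D)
     \<and> (\<forall>f. (\<forall>x. f x \<le> 0) \<longrightarrow> f \<notin> D)"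

definition cond_domain :: "(('a \<Rightarrow> real) \<times> 'a set) set" where
  "cond_domain = {(f, B). gamble f \<and> B \<noteq> {}}"

definition lowprev_D :: "('a \<Rightarrow> real) set \<Rightarrow> ('a \<Rightarrow> real) \<Rightarrow> 'a set \<Rightarrow> ereal" where
  "lowprev_D D f B = Sup (ereal ` {\<mu>. (\<lambda>x. (f x - \<mu>) * indicator B x) \<in> D})"

definition coherent_lp ::
  "(('a \<Rightarrow> real) \<Rightarrow> 'a set \<Rightarrow> ereal) \<Rightarrow> (('a \<Rightarrow> real) \<times> 'a set) set \<Rightarrow> bool" where
  "coherent_lp P C \<longleftrightarrow> C \<subseteq> cond_domain
     \<and> (\<exists>D. coherent_D D \<and> (\<forall>(f, B) \<in> C. P f B = lowprev_D D f B))"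

definition ext_lp ::
  "(('a \<Rightarrow> real) \<Rightarrow> 'a set \<Rightarrow> ereal) \<Rightarrow> (('a \<Rightarrow> real) \<times> 'a set) set \<Rightarrow> ('a \<Rightarrow> real) set" where
  "ext_lp P C = Ext {(\<lambda>x. (f x - \<mu>) * indicator B x) | f B \<mu>. (f, B) \<in> C \<and> ereal \<mu> < P f B}"

definition nat_ext ::
  "(('a \<Rightarrow> real) \<Rightarrow> 'a set \<Rightarrow> ereal) \<Rightarrow> (('a \<Rightarrow> real) \<times> 'a set) set \<Rightarrow> ('a \<Rightarrow> real) \<Rightarrow> 'a set \<Rightarrow> ereal" where
  "nat_ext P C f B = lowprev_D (ext_lp P C) f B"

definition prod_D ::
  "('a \<Rightarrow> real) set \<Rightarrow> 'a set set \<Rightarrow> ('b \<Rightarrow> real) set \<Rightarrow> 'b set set \<Rightarrow> ('a \<times> 'b \<Rightarrow> real) set" where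
  "prod_D D1 \<B>1 D2 \<B>2 = Ext
     ({(\<lambda>(x1, x2). f2 x2 * indicator B1 x1) | f2 B1. f2 \<in> D2 \<and> B1 \<in> \<B>1 \<union> {UNIV}}
    \<union> {(\<lambda>(x1, x2). f1 x1 * indicator B2 x2) | f1 B2. f1 \<in> D1 \<and> B2 \<in> \<B>2 \<union> {UNIV}})"

definition prod_lp ::
  "(('a \<Rightarrow> real) \<Rightarrow> 'a set \<Rightarrow> ereal) \<Rightarrow> (('a \<Rightarrow> real) \<times> 'a set) set \<Rightarrow> 'a set set \<Rightarrow>
   (('b \<Rightarrow> real) \<Rightarrow> 'b set \<Rightarrow> ereal) \<Rightarrow> (('b \<Rightarrow> real) \<times> 'b set) set \<Rightarrow> 'b set set \<Rightarrow>
   ('a \<times> 'b \<Rightarrow> real) \<Rightarrow> ('a \<times> 'b) set \<Rightarrow> ereal" where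
  "prod_lp P1 C1 \<B>1 P2 C2 \<B>2 f B = lowprev_D (prod_D (ext_lp P1 C1) \<B>1 (ext_lp P2 C2) \<B>2) f B"

definition simple_meas :: "'a set set \<Rightarrow> ('a \<Rightarrow> real) \<Rightarrow> bool" where
  "simple_meas \<B> g \<longleftrightarrow> (\<exists>(n::nat) (c::nat \<Rightarrow> real) (B::nat \<Rightarrow> 'a set).
      (\<forall>k \<le> n. c k \<ge> 0) \<and> (\<forall>k \<in> {1..n}. B k \<in> \<B>)
      \<and> g = (\<lambda>x. c 0 + (\<Sum>k=1..n. c k * indicator (B k) x)))"

definition meas :: "'a set set \<Rightarrow> ('a \<Rightarrow> real) \<Rightarrow> bool" where
  "meas \<B> g \<longleftrightarrow> g \<in> nonneg_gambles \<and>
     (\<exists>gs::nat \<Rightarrow> 'a \<Rightarrow> real. (\<forall>n. simple_meas \<B> (gs n))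
        \<and> (\<lambda>n. SUP x. \<bar>g x - gs n x\<bar>) \<longlonglongrightarrow> 0)"

end

theory Submission
  imports Defs
begin

text \<open>
  Let \<open>e\<close> be the natural extension of \<open>h\<close> under the second factor. By Zorn's lemma the
  coherent set of the second factor lies in a maximal coherent set whose (linear) prevision
  \<open>Q\<close> satisfies \<open>Q h = e\<close>. Every gamble of the independent product has \<open>x1\<close>-sections whose
  \<open>Q\<close>-values dominate a gamble that is desirable (or zero) for the first factor; applied to
  \<open>f + g h - \<mu>\<close> this yields \<open>\<le>\<close>. Conversely, approximating the measurable \<open>g\<close> uniformly
  by simple gambles \<open>s\<close>, the gamble \<open>f + g h - \<mu> + \<epsilon>\<close> splits into a desirable gamble on the first
  factor, the product \<open>s (h - e + \<delta>)\<close>, which is a non-negative combination of generators of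
  the product, and a non-negative remainder; this yields \<open>\<ge>\<close>. The second identity is the first
  one with the factors swapped.
\<close>

section \<open>Gambles\<close>

lemma gambleI: "(\<And>x. \<bar>f x\<bar> \<le> M) \<Longrightarrow> gamble f"
  unfolding gamble_def by blast

lemma gamble_bound: "gamble f \<Longrightarrow> \<exists>M \<ge> 0. \<forall>x. \<bar>f x\<bar> \<le> M"
  unfolding gamble_def by (meson abs_ge_zero order_trans)

lemma gamble_const [simp]: "gamble (\<lambda>x. c)"
  by (rule gambleI[of _ "\<bar>c\<bar>"]) simp

lemma gamble_indicator [simp]: "gamble (indicator B)"
  by (rule gambleI[of _ 1]) (simp split: split_indicator)

lemma gamble_add:
  assumes "gamble f" "gamble g"
  shows "gamble (\<lambda>x. f x + g x)"
proof -
  obtain M N where "\<And>x. \<bar>f x\<bar> \<le> M" "\<And>x. \<bar>g x\<bar> \<le> N"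
    using assms by (meson gamble_bound)
  then have "\<bar>f x + g x\<bar> \<le> M + N" for x
    by (meson abs_triangle_ineq add_mono order_trans)
  then show ?thesis by (rule gambleI)
qed

lemma gamble_mult:
  assumes "gamble f" "gamble g"
  shows "gamble (\<lambda>x. f x * g x)"
proof -
  obtain M N where "\<And>x. \<bar>f x\<bar> \<le> M" "M \<ge> 0" "\<And>x. \<bar>g x\<bar> \<le> N" "N \<ge> 0"
    using assms by (meson gamble_bound)
  then have "\<bar>f x * g x\<bar> \<le> M * N" for x
    unfolding abs_mult by (intro mult_mono) auto
  then show ?thesis by (rule gambleI)
qed

lemma gamble_cmult: "gamble f \<Longrightarrow> gamble (\<lambda>x. c * f x)"
  using gamble_mult[of "\<lambda>x. c" f] by simp

lemma gamble_diff: "gamble f \<Longrightarrow> gamble g \<Longrightarrow> gamble (\<lambda>x. f x - g x)"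
  using gamble_add[of f "\<lambda>x. -1 * g x"] gamble_cmult[of g "-1"] by simp

lemma gamble_comp: "gamble f \<Longrightarrow> gamble (\<lambda>x. f (k x))"
  unfolding gamble_def by blast

lemma gamble_sum: "(\<And>i. i \<in> I \<Longrightarrow> gamble (f i)) \<Longrightarrow> gamble (\<lambda>x. \<Sum>i\<in>I. f i x)"
proof (induction I rule: infinite_finite_induct)
  case (insert i I)
  then show ?case using gamble_add[of "f i" "\<lambda>x. \<Sum>i\<in>I. f i x"] by simp
qed simp_all

lemma gamble_tensor: "gamble a \<Longrightarrow> gamble b \<Longrightarrow> gamble (\<lambda>(x1, x2). a x1 * b x2)"
  using gamble_mult[OF gamble_comp[of a fst] gamble_comp[of b snd]] by (simp add: case_prod_beta')

section \<open>Coherent sets of desirable gambles\<close>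

lemma coherent_D_gamble: "coherent_D D \<Longrightarrow> a \<in> D \<Longrightarrow> gamble a"
  by (auto simp: coherent_D_def gambles_def)

lemma coherent_D_pos: "coherent_D D \<Longrightarrow> gamble a \<Longrightarrow> (\<And>x. a x \<ge> 0) \<Longrightarrow> a \<noteq> (\<lambda>_. 0) \<Longrightarrow> a \<in> D"
  by (simp add: coherent_D_def)

lemma coherent_D_scale: "coherent_D D \<Longrightarrow> a \<in> D \<Longrightarrow> c > 0 \<Longrightarrow> (\<lambda>x. c * a x) \<in> D"
  by (simp add: coherent_D_def)

lemma coherent_D_add: "coherent_D D \<Longrightarrow> a \<in> D \<Longrightarrow> b \<in> D \<Longrightarrow> (\<lambda>x. a x + b x) \<in> D"
  by (simp add: coherent_D_def)

lemma coherent_D_nonpos: "coherent_D D \<Longrightarrow> (\<And>x. a x \<le> 0) \<Longrightarrow> a \<notin> D"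
  by (simp add: coherent_D_def)

lemma coherent_D_const: "coherent_D D \<Longrightarrow> c > 0 \<Longrightarrow> (\<lambda>_. c) \<in> D"
  by (rule coherent_D_pos) (auto dest: fun_cong)

lemma coherent_D_mono:
  assumes "coherent_D D" "a \<in> D" "gamble b" "\<And>x. a x \<le> b x"
  shows "b \<in> D"
proof (cases "b = a")
  case False
  then have "(\<lambda>x. b x - a x) \<noteq> (\<lambda>_. 0)" by (auto simp: fun_eq_iff)
  then have "(\<lambda>x. b x - a x) \<in> D"
    using assms by (intro coherent_D_pos gamble_diff) (auto intro: coherent_D_gamble)
  from coherent_D_add[OF assms(1,2) this] show ?thesis by simp
qed (use assms in simp)

lemma coherent_D_neg: "coherent_D D \<Longrightarrow> a \<in> D \<Longrightarrow> (\<lambda>x. - a x) \<notin> D"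
  using coherent_D_add[of D a "\<lambda>x. - a x"] coherent_D_nonpos[of D "\<lambda>_. 0"] by auto

definition additive_cone :: "('a \<Rightarrow> real) set \<Rightarrow> bool" where
  "additive_cone K \<longleftrightarrow> (\<forall>a\<in>K. \<forall>c>0. (\<lambda>x. c * a x) \<in> K) \<and> (\<forall>a\<in>K. \<forall>b\<in>K. (\<lambda>x. a x + b x) \<in> K)"

lemma additive_coneI:
  "(\<And>a c. a \<in> K \<Longrightarrow> c > 0 \<Longrightarrow> (\<lambda>x. c * a x) \<in> K) \<Longrightarrow>
   (\<And>a b. a \<in> K \<Longrightarrow> b \<in> K \<Longrightarrow> (\<lambda>x. a x + b x) \<in> K) \<Longrightarrow> additive_cone K"
  unfolding additive_cone_def by blast

lemma additive_cone_scale: "additive_cone K \<Longrightarrow> a \<in> K \<Longrightarrow> c > 0 \<Longrightarrow> (\<lambda>x. c * a x) \<in> K"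
  unfolding additive_cone_def by blast

lemma additive_cone_add: "additive_cone K \<Longrightarrow> a \<in> K \<Longrightarrow> b \<in> K \<Longrightarrow> (\<lambda>x. a x + b x) \<in> K"
  unfolding additive_cone_def by blast

lemma coherent_D_additive_cone: "coherent_D D \<Longrightarrow> additive_cone D"
  by (simp add: additive_coneI coherent_D_add coherent_D_scale)

lemma additive_cone_insert_zero: "additive_cone K \<Longrightarrow> additive_cone (insert (\<lambda>_. 0) K)"
  unfolding additive_cone_def by auto

lemma additive_cone_add_insert_zero:
  "additive_cone K \<Longrightarrow> a \<in> K \<Longrightarrow> b \<in> insert (\<lambda>_. 0) K \<Longrightarrow> (\<lambda>x. a x + b x) \<in> K"
  using additive_cone_add by fastforce

lemma insert_zero_scale:
  "additive_cone K \<Longrightarrow> a \<in> insert (\<lambda>_. 0) K \<Longrightarrow> c \<ge> 0 \<Longrightarrow> (\<lambda>x. c * a x) \<in> insert (\<lambda>_. 0) K"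
  using additive_cone_scale[of K a c] by (cases "c = 0") auto

lemma insert_zero_sum:
  assumes "additive_cone K" "\<And>i. i \<in> I \<Longrightarrow> F i \<in> insert (\<lambda>_. 0) K"
  shows "(\<lambda>x. \<Sum>i\<in>I. F i x) \<in> insert (\<lambda>_. 0) K"
  using assms(2)
proof (induction I rule: infinite_finite_induct)
  case (insert i I)
  then show ?case
    using additive_cone_add[OF additive_cone_insert_zero[OF assms(1)], of "F i"] by simp
qed simp_all

lemma posiI:
  fixes lam :: "nat \<Rightarrow> real"
  shows "n \<ge> 1 \<Longrightarrow> \<forall>i<n. lam i > 0 \<and> fs i \<in> X \<Longrightarrow> a = (\<lambda>x. \<Sum>i<n. lam i * fs i x) \<Longrightarrow> a \<in> posi X"
  unfolding posi_def by blast

lemma posiE: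
  assumes "a \<in> posi X"
  obtains n :: nat and lam :: "nat \<Rightarrow> real" and fs
  where "n \<ge> 1" "\<forall>i<n. lam i > 0 \<and> fs i \<in> X" "a = (\<lambda>x. \<Sum>i<n. lam i * fs i x)"
  using assms unfolding posi_def by blast

lemma posi_base: "a \<in> X \<Longrightarrow> a \<in> posi X"
  by (rule posiI[of 1 "\<lambda>_. 1" "\<lambda>_. a"]) auto

lemma additive_cone_posi: "additive_cone (posi X)"
proof (rule additive_coneI)
  show "(\<lambda>x. c * a x) \<in> posi X" if a: "a \<in> posi X" and c: "c > 0" for a and c :: real
  proof -
    obtain n :: nat and lam fs where "n \<ge> 1" "\<forall>i<n. lam i > 0 \<and> fs i \<in> X" "a = (\<lambda>x. \<Sum>i<n. lam i * fs i x)"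
      using a by (rule posiE)
    with c show ?thesis
      by (intro posiI[of n "\<lambda>i. c * lam i" fs]) (auto simp: sum_distrib_left mult.assoc)
  qed
  show "(\<lambda>x. a x + b x) \<in> posi X" if a: "a \<in> posi X" and b: "b \<in> posi X" for a b
  proof -
    obtain n :: nat and lam fs where n: "n \<ge> 1" "\<forall>i<n. lam i > 0 \<and> fs i \<in> X" "a = (\<lambda>x. \<Sum>i<n. lam i * fs i x)"
      using a by (rule posiE)
    obtain m :: nat and mu gs where m: "m \<ge> 1" "\<forall>i<m. mu i > 0 \<and> gs i \<in> X" "b = (\<lambda>x. \<Sum>i<m. mu i * gs i x)"
      using b by (rule posiE)
    define lam' where "lam' i = (if i < n then lam i else mu (i - n))" for i
    define fs' where "fs' i = (if i < n then fs i else gs (i - n))" for i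
    have split: "(\<Sum>i<n + k. F i) = (\<Sum>i<n. F i) + (\<Sum>i<k. F (i + n))" for k and F :: "nat \<Rightarrow> real"
      by (induction k) (simp_all add: add.commute)
    have "(\<Sum>i<n + m. lam' i * fs' i x) = (\<Sum>i<n. lam i * fs i x) + (\<Sum>i<m. mu i * gs i x)" for x
      unfolding split by (simp add: lam'_def fs'_def)
    moreover have "\<forall>i<n + m. lam' i > 0 \<and> fs' i \<in> X"
      using n(2) m(2) unfolding lam'_def fs'_def by auto
    ultimately show ?thesis using n m by (intro posiI[of "n + m" lam' fs']) auto
  qed
qed

lemma posi_induct [consumes 1, case_names base scale add]:
  assumes "a \<in> posi X"
    and base: "\<And>b. b \<in> X \<Longrightarrow> R b"
    and scale: "\<And>b c. R b \<Longrightarrow> c > 0 \<Longrightarrow> R (\<lambda>x. c * b x)"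
    and add: "\<And>b b'. R b \<Longrightarrow> R b' \<Longrightarrow> R (\<lambda>x. b x + b' x)"
  shows "R a"
proof -
  obtain n :: nat and lam fs where n: "n \<ge> 1" and lam: "\<forall>i<n. lam i > 0 \<and> fs i \<in> X"
    and a: "a = (\<lambda>x. \<Sum>i<n. lam i * fs i x)"
    using assms(1) by (rule posiE)
  obtain m where m: "n = Suc m" using n by (cases n) auto
  have "R (\<lambda>x. \<Sum>i<Suc k. lam i * fs i x)" if "k \<le> m" for k
    using that
  proof (induction k)
    case 0
    then show ?case using lam m by (auto intro: scale base)
  next
    case (Suc k)
    have "R (\<lambda>x. lam (Suc k) * fs (Suc k) x)" using Suc.prems lam m by (intro scale base) auto
    with Suc show ?case using add by simp
  qed
  then show ?thesis using a m by blast
qed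

lemma posi_subset:
  assumes "additive_cone D" "X \<subseteq> D"
  shows "posi X \<subseteq> D"
proof
  fix a assume "a \<in> posi X"
  then show "a \<in> D"
    by (induction rule: posi_induct) (use assms in \<open>auto intro: additive_cone_scale additive_cone_add\<close>)
qed

lemma posi_comp:
  assumes "a \<in> posi X"
  shows "a \<circ> \<sigma> \<in> posi ((\<lambda>b. b \<circ> \<sigma>) ` X)"
proof -
  obtain n :: nat and lam fs where "n \<ge> 1" "\<forall>i<n. lam i > 0 \<and> fs i \<in> X" "a = (\<lambda>x. \<Sum>i<n. lam i * fs i x)"
    using assms by (rule posiE)
  then show ?thesis by (intro posiI[of n lam "\<lambda>i. fs i \<circ> \<sigma>"]) auto
qed

lemma Ext_base: "a \<in> X \<Longrightarrow> a \<in> Ext X"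
  unfolding Ext_def by (rule posi_base) simp

lemma Ext_pos: "gamble a \<Longrightarrow> (\<And>x. a x \<ge> 0) \<Longrightarrow> a \<noteq> (\<lambda>_. 0) \<Longrightarrow> a \<in> Ext X"
  unfolding Ext_def by (rule posi_base) (simp add: pos_gambles_def)

lemma additive_cone_Ext: "additive_cone (Ext X)"
  unfolding Ext_def by (rule additive_cone_posi)

lemma Ext_mono:
  assumes "a \<in> Ext X" "gamble (\<lambda>x. b x - a x)" "\<And>x. a x \<le> b x"
  shows "b \<in> Ext X"
proof -
  have "(\<lambda>x. b x - a x) \<in> insert (\<lambda>_. 0) (Ext X)"
    using assms(2,3) Ext_pos[of "\<lambda>x. b x - a x"] by force
  from additive_cone_add_insert_zero[OF additive_cone_Ext assms(1) this] show ?thesis by simp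
qed

lemma Ext_comp:
  fixes \<sigma> :: "'b \<Rightarrow> 'a" and a :: "'a \<Rightarrow> real"
  assumes "a \<in> Ext X" "surj \<sigma>" "(\<lambda>b. b \<circ> \<sigma>) ` X \<subseteq> Ext Y"
  shows "a \<circ> \<sigma> \<in> Ext Y"
proof -
  have "(\<lambda>b. b \<circ> \<sigma>) ` pos_gambles \<subseteq> Ext Y"
  proof clarify
    fix b :: "'a \<Rightarrow> real" assume "b \<in> pos_gambles"
    then have "gamble b" "\<And>x. b x \<ge> 0" "b \<noteq> (\<lambda>_. 0)" by (auto simp: pos_gambles_def)
    moreover from this(3) \<open>surj \<sigma>\<close> have "b \<circ> \<sigma> \<noteq> (\<lambda>_. 0)"
      by (metis comp_apply surj_def)
    ultimately show "b \<circ> \<sigma> \<in> Ext Y" by (intro Ext_pos) (auto simp: gamble_comp o_def)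
  qed
  with assms(3) have "posi ((\<lambda>b. b \<circ> \<sigma>) ` (X \<union> pos_gambles)) \<subseteq> Ext Y"
    by (intro posi_subset[OF additive_cone_Ext]) auto
  with posi_comp[OF assms(1)[unfolded Ext_def]] show ?thesis by blast
qed

lemma Ext_coherent:
  assumes "coherent_D D" "X \<subseteq> D"
  shows "coherent_D (Ext X)"
proof -
  have "pos_gambles \<subseteq> D"
    using assms(1) by (auto simp: pos_gambles_def intro: coherent_D_pos)
  then have "Ext X \<subseteq> D"
    unfolding Ext_def using assms by (intro posi_subset coherent_D_additive_cone) auto
  then show ?thesis
    using assms(1) additive_cone_Ext[of X] unfolding coherent_D_def additive_cone_def
    by (auto intro: Ext_pos simp: gambles_def)
qed

lemma ext_lp_coherent:
  assumes "coherent_lp P C"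
  shows "coherent_D (ext_lp P C)"
proof -
  obtain D where D: "coherent_D D" and P: "\<forall>(f, B) \<in> C. P f B = lowprev_D D f B"
    and C: "C \<subseteq> cond_domain"
    using assms unfolding coherent_lp_def by blast
  have "(\<lambda>x. (f x - \<mu>) * indicator B x) \<in> D" if fB: "(f, B) \<in> C" and \<mu>: "ereal \<mu> < P f B" for f B \<mu>
  proof -
    have "gamble f" using fB C unfolding cond_domain_def by auto
    have "ereal \<mu> < lowprev_D D f B" using P fB \<mu> by auto
    then obtain \<mu>' where \<mu>': "(\<lambda>x. (f x - \<mu>') * indicator B x) \<in> D" "\<mu> < \<mu>'"
      unfolding lowprev_D_def less_SUP_iff by auto
    show ?thesis
      by (rule coherent_D_mono[OF D \<mu>'(1)])
         (use \<mu>'(2) \<open>gamble f\<close> in \<open>auto intro!: gamble_mult gamble_diff split: split_indicator\<close>)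
  qed
  then show ?thesis unfolding ext_lp_def by (intro Ext_coherent[OF D]) blast
qed

section \<open>Lower previsions\<close>

lemma Sup_ereal_le_eps:
  assumes "\<And>a \<epsilon>. a \<in> A \<Longrightarrow> \<epsilon> > 0 \<Longrightarrow> a - \<epsilon> \<in> B"
  shows "Sup (ereal ` A) \<le> Sup (ereal ` B)"
proof (rule Sup_least)
  fix x assume "x \<in> ereal ` A"
  then obtain a where a: "a \<in> A" "x = ereal a" by blast
  show "x \<le> Sup (ereal ` B)" unfolding a(2)
  proof (rule ereal_le_epsilon2)
    fix \<epsilon> :: real assume "\<epsilon> > 0"
    then have "ereal (a - \<epsilon>) \<le> Sup (ereal ` B)" using assms[OF a(1)] by (intro Sup_upper) auto
    then show "ereal a \<le> Sup (ereal ` B) + ereal \<epsilon>"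
      by (metis add_right_mono diff_add_cancel plus_ereal.simps(1))
  qed
qed

lemma lowprev_D_UNIV: "lowprev_D D f UNIV = Sup (ereal ` {\<mu>. (\<lambda>x. f x - \<mu>) \<in> D})"
  unfolding lowprev_D_def by simp

lemma lowprev_D_UNIV_ge: "(\<lambda>x. f x - \<mu>) \<in> D \<Longrightarrow> ereal \<mu> \<le> lowprev_D D f UNIV"
  unfolding lowprev_D_UNIV by (rule Sup_upper) simp

lemma lowprev_D_UNIV_less:
  assumes "coherent_D D" "gamble f" "ereal \<nu> < lowprev_D D f UNIV"
  shows "(\<lambda>x. f x - \<nu>) \<in> D"
proof -
  obtain \<mu> where "(\<lambda>x. f x - \<mu>) \<in> D" "\<nu> < \<mu>"
    using assms(3) unfolding lowprev_D_UNIV less_SUP_iff by auto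
  then show ?thesis by (elim coherent_D_mono[OF assms(1)]) (auto intro: gamble_diff assms(2))
qed

lemma lowprev_D_UNIV_finite:
  assumes "coherent_D D" "gamble f"
  shows "\<bar>lowprev_D D f UNIV\<bar> \<noteq> \<infinity>"
proof -
  obtain M where M: "\<And>x. \<bar>f x\<bar> \<le> M" using assms(2) by (meson gamble_bound)
  have "(\<lambda>x. f x - (- M - 1)) \<in> D"
  proof (rule coherent_D_mono[OF assms(1) coherent_D_const[OF assms(1), of 1]])
    show "1 \<le> f x - (- M - 1)" for x using M[of x] by (simp add: abs_le_iff)
  qed (auto intro: gamble_diff assms(2))
  then have "ereal (- M - 1) \<le> lowprev_D D f UNIV" by (rule lowprev_D_UNIV_ge)
  moreover have "lowprev_D D f UNIV \<le> ereal M"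
    unfolding lowprev_D_UNIV
  proof (rule Sup_least, clarify)
    fix \<mu> assume "(\<lambda>x. f x - \<mu>) \<in> D"
    then obtain x where "f x - \<mu> > 0"
      using coherent_D_nonpos[OF assms(1), of "\<lambda>x. f x - \<mu>"] by (meson not_less)
    then show "ereal \<mu> \<le> ereal M" using M[of x] by (simp add: abs_le_iff)
  qed
  ultimately show ?thesis by auto
qed

lemma lowprev_D_UNIV_eqI:
  assumes "\<And>\<nu>. \<nu> < q \<Longrightarrow> (\<lambda>x. f x - \<nu>) \<in> D" "\<And>\<nu>. \<nu> > q \<Longrightarrow> (\<lambda>x. f x - \<nu>) \<notin> D"
  shows "lowprev_D D f UNIV = ereal q"
proof (rule antisym)
  show "lowprev_D D f UNIV \<le> ereal q"
    unfolding lowprev_D_UNIV by (rule Sup_least) (use assms(2) in \<open>force simp: not_less[symmetric]\<close>)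
  have "Sup (ereal ` {q}) \<le> lowprev_D D f UNIV"
    unfolding lowprev_D_UNIV using assms(1) by (intro Sup_ereal_le_eps) auto
  then show "ereal q \<le> lowprev_D D f UNIV" by simp
qed

definition prevision :: "('a \<Rightarrow> real) set \<Rightarrow> ('a \<Rightarrow> real) \<Rightarrow> real" where
  "prevision D f = real_of_ereal (lowprev_D D f UNIV)"

lemma lowprev_D_UNIV_prevision:
  "coherent_D D \<Longrightarrow> gamble f \<Longrightarrow> lowprev_D D f UNIV = ereal (prevision D f)"
  unfolding prevision_def using lowprev_D_UNIV_finite by (metis ereal_real')

lemma prevision_less:
  "coherent_D D \<Longrightarrow> gamble f \<Longrightarrow> \<nu> < prevision D f \<Longrightarrow> (\<lambda>x. f x - \<nu>) \<in> D"
  by (rule lowprev_D_UNIV_less) (simp_all add: lowprev_D_UNIV_prevision)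

lemma prevision_ge:
  "coherent_D D \<Longrightarrow> gamble f \<Longrightarrow> (\<lambda>x. f x - \<nu>) \<in> D \<Longrightarrow> \<nu> \<le> prevision D f"
  using lowprev_D_UNIV_ge[of f \<nu> D] by (simp add: lowprev_D_UNIV_prevision)

lemma prevision_eqI:
  assumes "\<And>\<nu>. \<nu> < q \<Longrightarrow> (\<lambda>x. f x - \<nu>) \<in> D" "\<And>\<nu>. \<nu> > q \<Longrightarrow> (\<lambda>x. f x - \<nu>) \<notin> D"
  shows "prevision D f = q"
  using lowprev_D_UNIV_eqI[of q f D] assms unfolding prevision_def by simp

lemma prevision_const:
  assumes "coherent_D D"
  shows "prevision D (\<lambda>_. c) = c"
proof (rule prevision_eqI)
  show "(\<lambda>x. c - \<nu>) \<in> D" if "\<nu> < c" for \<nu> using that by (intro coherent_D_const[OF assms]) simp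
  show "(\<lambda>x. c - \<nu>) \<notin> D" if "\<nu> > c" for \<nu> using that by (intro coherent_D_nonpos[OF assms]) simp
qed

lemma prevision_nonneg_of_mem: "coherent_D D \<Longrightarrow> a \<in> D \<Longrightarrow> prevision D a \<ge> 0"
  using prevision_ge[of D a 0] coherent_D_gamble by auto

lemma prevision_nonneg:
  assumes "coherent_D D" "gamble a" "\<And>x. a x \<ge> 0"
  shows "prevision D a \<ge> 0"
proof (cases "a = (\<lambda>_. 0)")
  case True
  then show ?thesis using prevision_const[OF assms(1)] by simp
next
  case False
  with assms show ?thesis by (intro prevision_nonneg_of_mem coherent_D_pos)
qed

locale maximal_coherent =
  fixes M :: "('a \<Rightarrow> real) set"
  assumes coherent: "coherent_D M"
    and maximal: "\<And>f. gamble f \<Longrightarrow> f \<notin> M \<Longrightarrow> f \<noteq> (\<lambda>_. 0) \<Longrightarrow> (\<lambda>x. - f x) \<in> M"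
begin

lemma prevision_greater:
  assumes "gamble a" "prevision M a < \<nu>"
  shows "(\<lambda>x. \<nu> - a x) \<in> M"
proof -
  have "(\<lambda>x. a x - \<nu>) \<notin> M" using prevision_ge[OF coherent assms(1)] assms(2) by force
  moreover have "(\<lambda>x. a x - \<nu>) \<noteq> (\<lambda>_. 0)"
  proof
    assume "(\<lambda>x. a x - \<nu>) = (\<lambda>_. 0)"
    then have "a = (\<lambda>_. \<nu>)" by (auto simp: fun_eq_iff)
    then show False using assms(2) prevision_const[OF coherent] by simp
  qed
  ultimately show ?thesis using maximal[of "\<lambda>x. a x - \<nu>"] assms(1) by (simp add: gamble_diff)
qed

lemma prevision_eqI2:
  assumes "\<And>\<nu>. \<nu> < q \<Longrightarrow> (\<lambda>x. a x - \<nu>) \<in> M" "\<And>\<nu>. \<nu> > q \<Longrightarrow> (\<lambda>x. \<nu> - a x) \<in> M"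
  shows "prevision M a = q"
proof (rule prevision_eqI)
  show "(\<lambda>x. a x - \<nu>) \<notin> M" if "\<nu> > q" for \<nu>
    using coherent_D_neg[OF coherent assms(2)[OF that]] by simp
qed (fact assms(1))

lemma prevision_add:
  assumes "gamble a" "gamble b"
  shows "prevision M (\<lambda>x. a x + b x) = prevision M a + prevision M b"
proof (rule prevision_eqI2)
  fix \<nu>
  define d where "d = (prevision M a + prevision M b - \<nu>) / 2"
  show "(\<lambda>x. a x + b x - \<nu>) \<in> M" if "\<nu> < prevision M a + prevision M b"
  proof -
    have "(\<lambda>x. (a x - (prevision M a - d)) + (b x - (prevision M b - d))) \<in> M"
      using that assms unfolding d_def by (intro coherent_D_add[OF coherent] prevision_less[OF coherent]) auto
    moreover have "(\<lambda>x. (a x - (prevision M a - d)) + (b x - (prevision M b - d))) = (\<lambda>x. a x + b x - \<nu>)"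
      by (rule ext) (simp add: d_def field_simps)
    ultimately show ?thesis by simp
  qed
  show "(\<lambda>x. \<nu> - (a x + b x)) \<in> M" if "\<nu> > prevision M a + prevision M b"
  proof -
    have "(\<lambda>x. ((prevision M a - d) - a x) + ((prevision M b - d) - b x)) \<in> M"
      using that assms unfolding d_def by (intro coherent_D_add[OF coherent] prevision_greater) auto
    moreover have "(\<lambda>x. ((prevision M a - d) - a x) + ((prevision M b - d) - b x)) = (\<lambda>x. \<nu> - (a x + b x))"
      by (rule ext) (simp add: d_def field_simps)
    ultimately show ?thesis by simp
  qed
qed

lemma prevision_scale:
  assumes "gamble a"
  shows "prevision M (\<lambda>x. c * a x) = c * prevision M a"
proof (cases "c = 0")
  case True
  then show ?thesis using prevision_const[OF coherent, of 0] by simp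
next
  case False
  have lower: "(\<lambda>x. t * a x - \<nu>) \<in> M" if "\<nu> < t * prevision M a" "t \<noteq> 0" for t \<nu>
  proof (cases "t > 0")
    case True
    then have "(\<lambda>x. t * (a x - \<nu> / t)) \<in> M"
      using that(1) assms by (intro coherent_D_scale[OF coherent] prevision_less[OF coherent])
        (auto simp: field_simps)
    with True show ?thesis by (simp add: algebra_simps)
  next
    case False
    then have "(\<lambda>x. - t * (\<nu> / t - a x)) \<in> M"
      using that assms by (intro coherent_D_scale[OF coherent] prevision_greater)
        (auto simp: field_simps)
    with False \<open>t \<noteq> 0\<close> show ?thesis by (simp add: algebra_simps)
  qed
  show ?thesis
  proof (rule prevision_eqI2)
    show "(\<lambda>x. c * a x - \<nu>) \<in> M" if "\<nu> < c * prevision M a" for \<nu>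
      using lower[OF that False] .
    show "(\<lambda>x. \<nu> - c * a x) \<in> M" if "\<nu> > c * prevision M a" for \<nu>
      using lower[of "- \<nu>" "- c"] that False by simp
  qed
qed

end

section \<open>Maximal coherent extensions\<close>

definition cone_extension :: "('a \<Rightarrow> real) set \<Rightarrow> ('a \<Rightarrow> real) set \<Rightarrow> ('a \<Rightarrow> real) set" where
  "cone_extension D K = D \<union> {a. gamble a \<and> (\<exists>k\<in>K. (\<lambda>x. a x + k x) \<in> insert (\<lambda>_. 0) D)}"

lemma subset_cone_extension: "D \<subseteq> cone_extension D K"
  unfolding cone_extension_def by blast

lemma neg_in_cone_extension: "k \<in> K \<Longrightarrow> gamble k \<Longrightarrow> (\<lambda>x. - k x) \<in> cone_extension D K"
  unfolding cone_extension_def by (auto intro!: bexI[of _ k] gamble_cmult[of k "-1", simplified])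

lemma coherent_cone_extension:
  assumes D: "coherent_D D" and K: "additive_cone K" "K \<subseteq> gambles"
    and avoid: "\<And>k d. k \<in> K \<Longrightarrow> d \<in> insert (\<lambda>_. 0) D \<Longrightarrow> \<not> (\<forall>x. d x \<le> k x)"
  shows "coherent_D (cone_extension D K)"
proof -
  define E where "E = {a. gamble a \<and> (\<exists>k\<in>K. (\<lambda>x. a x + k x) \<in> insert (\<lambda>_. 0) D)}"
  have DE: "cone_extension D K = D \<union> E" unfolding cone_extension_def E_def ..
  have D0: "additive_cone (insert (\<lambda>_. 0) D)"
    by (rule additive_cone_insert_zero[OF coherent_D_additive_cone[OF D]])
  have add_E: "(\<lambda>x. a x + b x) \<in> E" if a: "a \<in> D \<union> E" and b: "b \<in> E" for a b
  proof -
    obtain k where k: "k \<in> K" "(\<lambda>x. b x + k x) \<in> insert (\<lambda>_. 0) D" and "gamble b"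
      using b unfolding E_def by blast
    have "gamble a" using a D unfolding E_def by (auto intro: coherent_D_gamble)
    show ?thesis
    proof (cases "a \<in> D")
      case True
      from additive_cone_add_insert_zero[OF coherent_D_additive_cone[OF D] True k(2)]
      show ?thesis using k(1) \<open>gamble a\<close> \<open>gamble b\<close> unfolding E_def
        by (auto intro!: bexI[of _ k] gamble_add simp: add.assoc)
    next
      case False
      then obtain k' where k': "k' \<in> K" "(\<lambda>x. a x + k' x) \<in> insert (\<lambda>_. 0) D"
        using a unfolding E_def by blast
      from additive_cone_add[OF D0 k'(2) k(2)]
      show ?thesis using additive_cone_add[OF K(1) k'(1) k(1)] \<open>gamble a\<close> \<open>gamble b\<close> unfolding E_def
        by (auto intro!: bexI[of _ "\<lambda>x. k' x + k x"] gamble_add simp: ac_simps)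
    qed
  qed
  show ?thesis
    unfolding coherent_D_def DE
  proof (intro conjI allI impI ballI)
    show "D \<union> E \<subseteq> gambles" using D unfolding E_def by (auto simp: gambles_def intro: coherent_D_gamble)
    show "f \<in> D \<union> E" if "gamble f \<and> (\<forall>x. 0 \<le> f x) \<and> f \<noteq> (\<lambda>_. 0)" for f
      using that coherent_D_pos[OF D] by blast
    show "(\<lambda>x. c * a x) \<in> D \<union> E" if a: "a \<in> D \<union> E" and c: "0 < c" for a c
    proof (cases "a \<in> D")
      case False
      then obtain k where "k \<in> K" "(\<lambda>x. a x + k x) \<in> insert (\<lambda>_. 0) D" "gamble a"
        using a unfolding E_def by blast
      with c show ?thesis
        using insert_zero_scale[OF coherent_D_additive_cone[OF D], of "\<lambda>x. a x + k x" c]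
          additive_cone_scale[OF K(1), of k c]
        unfolding E_def by (auto intro!: bexI[of _ "\<lambda>x. c * k x"] gamble_cmult simp: distrib_left)
    qed (use coherent_D_scale[OF D] c in blast)
    show "(\<lambda>x. a x + b x) \<in> D \<union> E" if "a \<in> D \<union> E" "b \<in> D \<union> E" for a b
      using that add_E[of a b] add_E[of b a] coherent_D_add[OF D, of a b] by (auto simp: add.commute)
    show "a \<notin> D \<union> E" if "\<forall>x. a x \<le> 0" for a
    proof
      assume "a \<in> D \<union> E"
      moreover have "a \<notin> D" using that coherent_D_nonpos[OF D] by blast
      ultimately obtain k where "k \<in> K" "(\<lambda>x. a x + k x) \<in> insert (\<lambda>_. 0) D"
        unfolding E_def by blast
      with avoid[of k "\<lambda>x. a x + k x"] that show False by auto
    qed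
  qed
qed

lemma coherent_D_Union_chain:
  assumes "C \<noteq> {}" "\<And>M. M \<in> C \<Longrightarrow> coherent_D M" "\<And>M N. M \<in> C \<Longrightarrow> N \<in> C \<Longrightarrow> M \<subseteq> N \<or> N \<subseteq> M"
  shows "coherent_D (\<Union>C)"
  unfolding coherent_D_def
proof (intro conjI allI impI ballI)
  show "\<Union>C \<subseteq> gambles" using assms(2) by (auto simp: gambles_def intro: coherent_D_gamble)
  show "f \<in> \<Union>C" if "gamble f \<and> (\<forall>x. 0 \<le> f x) \<and> f \<noteq> (\<lambda>_. 0)" for f
    using assms(1,2) that coherent_D_pos by blast
  show "(\<lambda>x. c * f x) \<in> \<Union>C" if "f \<in> \<Union>C" "0 < c" for f c
    using that assms(2) coherent_D_scale by blast
  show "(\<lambda>x. f x + g x) \<in> \<Union>C" if fg: "f \<in> \<Union>C" "g \<in> \<Union>C" for f g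
  proof -
    obtain M N where "M \<in> C" "N \<in> C" "f \<in> M" "g \<in> N" using fg by blast
    with assms(2) assms(3)[of M N] show ?thesis using coherent_D_add by blast
  qed
  show "f \<notin> \<Union>C" if "\<forall>x. f x \<le> 0" for f
    using that assms(2) coherent_D_nonpos by blast
qed

lemma maximal_coherentI:
  assumes M: "coherent_D M" and max: "\<And>M'. coherent_D M' \<Longrightarrow> M \<subseteq> M' \<Longrightarrow> M' = M"
  shows "maximal_coherent M"
proof
  fix f assume f: "gamble f" "f \<notin> M" "f \<noteq> (\<lambda>_. 0)"
  define K where "K = {\<lambda>x. l * f x | l. l > 0}"
  have "additive_cone K"
    unfolding K_def
  proof (rule additive_coneI; clarify)
    fix l c :: real assume "l > 0" "c > 0"
    then show "\<exists>l'. (\<lambda>x. c * (l * f x)) = (\<lambda>x. l' * f x) \<and> l' > 0"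
      by (intro exI[of _ "c * l"]) (simp add: mult.assoc)
  next
    fix l l' :: real assume "l > 0" "l' > 0"
    then show "\<exists>l''. (\<lambda>x. l * f x + l' * f x) = (\<lambda>x. l'' * f x) \<and> l'' > 0"
      by (intro exI[of _ "l + l'"]) (simp add: distrib_right)
  qed
  moreover have "K \<subseteq> gambles" unfolding K_def gambles_def using f(1) by (auto intro: gamble_cmult)
  moreover have "\<not> (\<forall>x. d x \<le> l * f x)" if "l > 0" "d \<in> insert (\<lambda>_. 0) M" for d l
  proof
    assume le: "\<forall>x. d x \<le> l * f x"
    have dl: "(\<lambda>x. (1 / l) * d x) \<in> insert (\<lambda>_. 0) M"
      using that by (intro insert_zero_scale coherent_D_additive_cone M) auto
    have le': "(1 / l) * d x \<le> f x" for x
      using le that(1) by (simp add: field_simps)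
    have "f \<in> M"
    proof (cases "(\<lambda>x. (1 / l) * d x) = (\<lambda>_. 0)")
      case True
      then have "f x \<ge> 0" for x using le'[of x] fun_cong[OF True, of x] by (simp only:)
      with f show ?thesis by (intro coherent_D_pos[OF M]) auto
    next
      case False
      with dl have "(\<lambda>x. (1 / l) * d x) \<in> M" by simp
      from coherent_D_mono[OF M this f(1) le'] show ?thesis .
    qed
    with f(2) show False ..
  qed
  ultimately have "coherent_D (cone_extension M K)"
    unfolding K_def by (intro coherent_cone_extension M) blast+
  then have "cone_extension M K = M" by (rule max) (rule subset_cone_extension)
  moreover have "f \<in> K" unfolding K_def by (intro CollectI exI[of _ "1::real"]) simp
  ultimately show "(\<lambda>x. - f x) \<in> M" using neg_in_cone_extension[OF _ f(1)] by blast
qed (fact M)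

lemma coherent_superset_above_prevision:
  assumes D: "coherent_D D" and h: "gamble h"
  shows "\<exists>M. coherent_D M \<and> D \<subseteq> M \<and> (\<forall>\<nu> > prevision D h. (\<lambda>x. \<nu> - h x) \<in> M)"
proof -
  define e where "e = prevision D h"
  define K where "K = {\<lambda>x. c * (h x - \<nu>) | c \<nu>. c > 0 \<and> \<nu> > e}"
  have K_I: "(\<lambda>x. c * (h x - \<nu>)) \<in> K" if "c > 0" "\<nu> > e" for c \<nu>
    unfolding K_def using that by blast
  have "additive_cone K"
  proof (rule additive_coneI)
    fix a and c' :: real assume "a \<in> K" "c' > 0"
    then obtain c \<nu> where a: "a = (\<lambda>x. c * (h x - \<nu>))" "c > 0" "\<nu> > e" unfolding K_def by blast
    then have "(\<lambda>x. c' * a x) = (\<lambda>x. (c' * c) * (h x - \<nu>))" by (simp add: mult.assoc)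
    with K_I[of "c' * c" \<nu>] a(2,3) \<open>c' > 0\<close> show "(\<lambda>x. c' * a x) \<in> K" by simp
  next
    fix a b assume "a \<in> K" "b \<in> K"
    then obtain c \<nu> c' \<nu>' where a: "a = (\<lambda>x. c * (h x - \<nu>))" "c > 0" "\<nu> > e"
      and b: "b = (\<lambda>x. c' * (h x - \<nu>'))" "c' > 0" "\<nu>' > e"
      unfolding K_def by blast
    define \<mu> where "\<mu> = (c * \<nu> + c' * \<nu>') / (c + c')"
    have "(c + c') * e < c * \<nu> + c' * \<nu>'"
      using mult_strict_left_mono[OF a(3,2)] mult_strict_left_mono[OF b(3,2)]
      by (simp add: distrib_right)
    then have "\<mu> > e" unfolding \<mu>_def using a(2) b(2) by (simp add: pos_less_divide_eq mult.commute)
    moreover have "(\<lambda>x. a x + b x) = (\<lambda>x. (c + c') * (h x - \<mu>))"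
    proof
      fix x
      have "(c + c') * \<mu> = c * \<nu> + c' * \<nu>'" unfolding \<mu>_def using a(2) b(2) by simp
      then have "(c + c') * (h x - \<mu>) = (c + c') * h x - (c * \<nu> + c' * \<nu>')"
        by (simp only: right_diff_distrib)
      then show "a x + b x = (c + c') * (h x - \<mu>)" unfolding a(1) b(1) by (simp add: algebra_simps)
    qed
    ultimately show "(\<lambda>x. a x + b x) \<in> K" using K_I[of "c + c'" \<mu>] a(2) b(2) by simp
  qed
  moreover have "K \<subseteq> gambles"
    unfolding K_def gambles_def using h by (auto intro!: gamble_cmult gamble_diff)
  moreover have "\<not> (\<forall>x. d x \<le> c * (h x - \<nu>))" if "c > 0" "\<nu> > e" "d \<in> insert (\<lambda>_. 0) D" for c \<nu> d
  proof
    assume le: "\<forall>x. d x \<le> c * (h x - \<nu>)"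
    \<comment> \<open>a point strictly between \<open>e\<close> and \<open>\<nu>\<close> leaves a positive constant as slack\<close>
    define \<nu>' where "\<nu>' = (e + \<nu>) / 2"
    have "(\<lambda>x. \<nu> - \<nu>') \<in> D" by (rule coherent_D_const[OF D]) (use that(2) in \<open>simp add: \<nu>'_def\<close>)
    moreover have "(\<lambda>x. (1 / c) * d x) \<in> insert (\<lambda>_. 0) D"
      by (rule insert_zero_scale[OF coherent_D_additive_cone[OF D] that(3)]) (use that(1) in simp)
    ultimately have "(\<lambda>x. (\<nu> - \<nu>') + (1 / c) * d x) \<in> D"
      by (rule additive_cone_add_insert_zero[OF coherent_D_additive_cone[OF D]])
    moreover have "(\<nu> - \<nu>') + (1 / c) * d x \<le> h x - \<nu>'" for x
      using le that(1) by (simp add: field_simps)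
    ultimately have "(\<lambda>x. h x - \<nu>') \<in> D"
      by (rule coherent_D_mono[OF D _ gamble_diff[OF h gamble_const]])
    then have "\<nu>' \<le> e" unfolding e_def by (rule prevision_ge[OF D h])
    with that(2) show False unfolding \<nu>'_def by simp
  qed
  ultimately have "coherent_D (cone_extension D K)"
    unfolding K_def by (intro coherent_cone_extension D) blast+
  moreover have "(\<lambda>x. \<nu> - h x) \<in> cone_extension D K" if "\<nu> > e" for \<nu>
  proof -
    have "(\<lambda>x. 1 * (h x - \<nu>)) \<in> K" using K_I[of 1 \<nu>] that by simp
    from neg_in_cone_extension[OF this] show ?thesis by (simp add: gamble_diff h)
  qed
  ultimately show ?thesis using subset_cone_extension unfolding e_def by blast
qed

lemma exists_maximal_coherent_prevision:
  assumes D: "coherent_D D" and h: "gamble h"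
  obtains M where "maximal_coherent M" "D \<subseteq> M" "prevision M h = prevision D h"
proof -
  define S where "S = {M. coherent_D M \<and> D \<subseteq> M \<and> (\<forall>\<nu> > prevision D h. (\<lambda>x. \<nu> - h x) \<in> M)}"
  have "\<exists>M\<in>S. \<forall>M'\<in>S. M \<subseteq> M' \<longrightarrow> M' = M"
  proof (rule subset_Zorn_nonempty)
    show "S \<noteq> {}"
      using coherent_superset_above_prevision[OF D h] unfolding S_def by blast
    show "\<Union>C \<in> S" if C: "C \<noteq> {}" "subset.chain S C" for C
    proof -
      have CS: "C \<subseteq> S" and ch: "\<forall>X\<in>C. \<forall>Y\<in>C. X \<subseteq> Y \<or> Y \<subseteq> X"
        using C(2) unfolding subset_chain_def by auto
      have "coherent_D (\<Union>C)"
      proof (rule coherent_D_Union_chain[OF C(1)])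
        show "coherent_D M" if "M \<in> C" for M using that CS unfolding S_def by blast
      qed (use ch in blast)
      moreover obtain M0 where "M0 \<in> C" using C(1) by blast
      ultimately show ?thesis using CS unfolding S_def by blast
    qed
  qed
  then obtain M where M: "M \<in> S" and max: "\<And>M'. M' \<in> S \<Longrightarrow> M \<subseteq> M' \<Longrightarrow> M' = M" by blast
  have coh: "coherent_D M" and DM: "D \<subseteq> M" and above: "\<And>\<nu>. \<nu> > prevision D h \<Longrightarrow> (\<lambda>x. \<nu> - h x) \<in> M"
    using M unfolding S_def by auto
  have mc: "maximal_coherent M"
  proof (rule maximal_coherentI[OF coh])
    fix M' assume "coherent_D M'" "M \<subseteq> M'"
    then have "M' \<in> S" using DM above unfolding S_def by blast
    with \<open>M \<subseteq> M'\<close> show "M' = M" by (intro max)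
  qed
  moreover have "prevision M h = prevision D h"
  proof (rule maximal_coherent.prevision_eqI2[OF mc])
    show "(\<lambda>x. h x - \<nu>) \<in> M" if "\<nu> < prevision D h" for \<nu>
      using DM prevision_less[OF D h that] by blast
  qed (fact above)
  ultimately show ?thesis using DM that by blast
qed

section \<open>Independent products\<close>

definition prod_generators ::
  "('a \<Rightarrow> real) set \<Rightarrow> 'a set set \<Rightarrow> ('b \<Rightarrow> real) set \<Rightarrow> 'b set set \<Rightarrow> ('a \<times> 'b \<Rightarrow> real) set" where
  "prod_generators D1 \<B>1 D2 \<B>2 =
     {(\<lambda>(x1, x2). f2 x2 * indicator B1 x1) | f2 B1. f2 \<in> D2 \<and> B1 \<in> \<B>1 \<union> {UNIV}}
   \<union> {(\<lambda>(x1, x2). f1 x1 * indicator B2 x2) | f1 B2. f1 \<in> D1 \<and> B2 \<in> \<B>2 \<union> {UNIV}}"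

lemma prod_D_Ext: "prod_D D1 \<B>1 D2 \<B>2 = Ext (prod_generators D1 \<B>1 D2 \<B>2)"
  unfolding prod_D_def prod_generators_def ..

lemma D2_times_indicator_in_prod_D:
  "f2 \<in> D2 \<Longrightarrow> B \<in> \<B>1 \<union> {UNIV} \<Longrightarrow> (\<lambda>(x1, x2). f2 x2 * indicator B x1) \<in> prod_D D1 \<B>1 D2 \<B>2"
  unfolding prod_D_Ext prod_generators_def by (rule Ext_base) blast

lemma D1_times_indicator_in_prod_D:
  "f1 \<in> D1 \<Longrightarrow> B \<in> \<B>2 \<union> {UNIV} \<Longrightarrow> (\<lambda>(x1, x2). f1 x1 * indicator B x2) \<in> prod_D D1 \<B>1 D2 \<B>2"
  unfolding prod_D_Ext prod_generators_def by (rule Ext_base) blast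

lemma additive_cone_prod_D: "additive_cone (prod_D D1 \<B>1 D2 \<B>2)"
  unfolding prod_D_Ext by (rule additive_cone_Ext)

lemma prod_D_swap:
  assumes "\<phi> \<in> prod_D D1 \<B>1 D2 \<B>2"
  shows "\<phi> \<circ> prod.swap \<in> prod_D D2 \<B>2 D1 \<B>1"
proof -
  have "b \<circ> prod.swap \<in> prod_D D2 \<B>2 D1 \<B>1" if "b \<in> prod_generators D1 \<B>1 D2 \<B>2" for b
  proof -
    from that consider
      (left) f2 B1 where "b = (\<lambda>(x1, x2). f2 x2 * indicator B1 x1)" "f2 \<in> D2" "B1 \<in> \<B>1 \<union> {UNIV}"
    | (right) f1 B2 where "b = (\<lambda>(x1, x2). f1 x1 * indicator B2 x2)" "f1 \<in> D1" "B2 \<in> \<B>2 \<union> {UNIV}"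
      unfolding prod_generators_def by blast
    then show ?thesis
    proof cases
      case left
      then show ?thesis using D1_times_indicator_in_prod_D[of f2 D2 B1 \<B>1 \<B>2 D1] by (simp add: comp_def)
    next
      case right
      then show ?thesis using D2_times_indicator_in_prod_D[of f1 D1 B2 \<B>2 D2 \<B>1] by (simp add: comp_def)
    qed
  qed
  then have "(\<lambda>b. b \<circ> prod.swap) ` prod_generators D1 \<B>1 D2 \<B>2 \<subseteq> Ext (prod_generators D2 \<B>2 D1 \<B>1)"
    unfolding prod_D_Ext by (rule image_subsetI)
  from Ext_comp[OF assms[unfolded prod_D_Ext] surj_swap this] show ?thesis unfolding prod_D_Ext .
qed

lemma lowprev_prod_D_swap:
  "lowprev_D (prod_D D1 \<B>1 D2 \<B>2) \<phi> UNIV = lowprev_D (prod_D D2 \<B>2 D1 \<B>1) (\<phi> \<circ> prod.swap) UNIV"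
proof -
  have "(\<lambda>x. \<phi> x - \<mu>) \<in> prod_D D1 \<B>1 D2 \<B>2 \<longleftrightarrow> (\<lambda>x. (\<phi> \<circ> prod.swap) x - \<mu>) \<in> prod_D D2 \<B>2 D1 \<B>1" for \<mu>
    using prod_D_swap[of "\<lambda>x. \<phi> x - \<mu>" D1 \<B>1 D2 \<B>2]
      prod_D_swap[of "\<lambda>x. (\<phi> \<circ> prod.swap) x - \<mu>" D2 \<B>2 D1 \<B>1]
    by (auto simp: comp_def)
  then show ?thesis unfolding lowprev_D_UNIV by simp
qed

lemma prod_D_section_prevision:
  assumes D1: "coherent_D D1" and M: "maximal_coherent M" and D2M: "D2 \<subseteq> M"
    and \<psi>: "\<psi> \<in> prod_D D1 \<B>1 D2 \<B>2"
  shows "\<exists>V \<in> insert (\<lambda>_. 0) D1. \<forall>x1. V x1 \<le> prevision M (\<lambda>x2. \<psi> (x1, x2))"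
proof -
  interpret maximal_coherent M by (fact M)
  have cone: "additive_cone (insert (\<lambda>_. 0) D1)"
    by (rule additive_cone_insert_zero[OF coherent_D_additive_cone[OF D1]])
  define R where "R \<psi> \<longleftrightarrow> gamble \<psi> \<and> (\<exists>V \<in> insert (\<lambda>_. 0) D1. \<forall>x1. V x1 \<le> prevision M (\<lambda>x2. \<psi> (x1, x2)))"
    for \<psi> :: "'a \<times> 'b \<Rightarrow> real"
  have section_gamble: "gamble (\<lambda>x2. \<psi> (x1, x2))" if "gamble \<psi>" for \<psi> :: "'a \<times> 'b \<Rightarrow> real" and x1
    using gamble_comp[OF that] .
  have "R \<psi>"
    using \<psi> unfolding prod_D_Ext Ext_def
  proof (induction rule: posi_induct)
    case (base \<psi>)
    then consider
      (left) f2 B where "\<psi> = (\<lambda>(x1, x2). f2 x2 * indicator B x1)" "f2 \<in> D2"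
    | (right) f1 B where "\<psi> = (\<lambda>(x1, x2). f1 x1 * indicator B x2)" "f1 \<in> D1"
    | (pos) "\<psi> \<in> pos_gambles"
      unfolding prod_generators_def by blast
    then show ?case
    proof cases
      case left
      have "gamble f2" using left(2) D2M coherent by (auto intro: coherent_D_gamble)
      have "prevision M (\<lambda>x2. \<psi> (x1, x2)) = indicator B x1 * prevision M f2" for x1
        using left(1) prevision_scale[OF \<open>gamble f2\<close>, of "indicator B x1"] by (simp add: mult.commute)
      moreover have "0 \<le> indicator B x1 * prevision M f2" for x1
        using left(2) D2M prevision_nonneg_of_mem[OF coherent] by auto
      moreover have "gamble \<psi>"
        using left(1) gamble_tensor[OF gamble_indicator \<open>gamble f2\<close>, of B] by (simp add: mult.commute)
      ultimately show ?thesis unfolding R_def by auto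
    next
      case right
      have "gamble f1" using D1 right(2) by (rule coherent_D_gamble)
      have "0 \<le> prevision M (indicator B)" by (rule prevision_nonneg[OF coherent]) auto
      then have "(\<lambda>x1. prevision M (indicator B) * f1 x1) \<in> insert (\<lambda>_. 0) D1"
        using right(2) by (intro insert_zero_scale[OF coherent_D_additive_cone[OF D1]]) auto
      moreover have "prevision M (\<lambda>x2. \<psi> (x1, x2)) = prevision M (indicator B) * f1 x1" for x1
        using right(1) prevision_scale[of "indicator B" "f1 x1"] by (simp add: mult.commute)
      moreover have "gamble \<psi>"
        using right(1) gamble_tensor[OF \<open>gamble f1\<close> gamble_indicator, of B] by simp
      ultimately show ?thesis
        unfolding R_def by (intro conjI bexI[of _ "\<lambda>x1. prevision M (indicator B) * f1 x1"]) auto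
    next
      case pos
      then have "gamble \<psi>" "\<And>p. \<psi> p \<ge> 0" by (auto simp: pos_gambles_def)
      then show ?thesis
        unfolding R_def by (auto intro!: bexI[of _ "\<lambda>_. 0"] prevision_nonneg[OF coherent] section_gamble)
    qed
  next
    case (scale \<psi> c)
    then obtain V where \<psi>: "gamble \<psi>" and V: "V \<in> insert (\<lambda>_. 0) D1"
      and le: "\<And>x1. V x1 \<le> prevision M (\<lambda>x2. \<psi> (x1, x2))"
      unfolding R_def by blast
    have "(\<lambda>x. c * V x) \<in> insert (\<lambda>_. 0) D1"
      using V scale(2) by (intro insert_zero_scale[OF coherent_D_additive_cone[OF D1]]) auto
    moreover have "c * V x1 \<le> prevision M (\<lambda>x2. c * \<psi> (x1, x2))" for x1
      unfolding prevision_scale[OF section_gamble[OF \<psi>]] using le[of x1] scale(2) by simp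
    ultimately show ?case
      unfolding R_def using gamble_cmult[OF \<psi>] by (intro conjI bexI[of _ "\<lambda>x. c * V x"]) auto
  next
    case (add \<psi> \<psi>')
    then obtain V V' where \<psi>: "gamble \<psi>" "gamble \<psi>'"
      and V: "V \<in> insert (\<lambda>_. 0) D1" "V' \<in> insert (\<lambda>_. 0) D1"
      and le: "\<And>x1. V x1 \<le> prevision M (\<lambda>x2. \<psi> (x1, x2))" "\<And>x1. V' x1 \<le> prevision M (\<lambda>x2. \<psi>' (x1, x2))"
      unfolding R_def by blast
    have "(\<lambda>x. V x + V' x) \<in> insert (\<lambda>_. 0) D1" using V by (rule additive_cone_add[OF cone])
    moreover have "V x1 + V' x1 \<le> prevision M (\<lambda>x2. \<psi> (x1, x2) + \<psi>' (x1, x2))" for x1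
      unfolding prevision_add[OF section_gamble[OF \<psi>(1)] section_gamble[OF \<psi>(2)]]
      using le[of x1] by (rule add_mono)
    ultimately show ?case
      unfolding R_def using gamble_add[OF \<psi>] by (intro conjI bexI[of _ "\<lambda>x. V x + V' x"]) auto
  qed
  then show ?thesis unfolding R_def by blast
qed

lemma prod_D_le_marginal:
  assumes D1: "coherent_D D1" and D2: "coherent_D D2" and f: "gamble f" and g: "gamble g" and h: "gamble h"
    and \<psi>: "(\<lambda>p. (\<lambda>(x1, x2). f x1 + g x1 * h x2) p - a) \<in> prod_D D1 \<B>1 D2 \<B>2" and \<epsilon>: "\<epsilon> > 0"
  shows "(\<lambda>x1. f x1 + g x1 * prevision D2 h - (a - \<epsilon>)) \<in> D1"
proof -
  obtain M where M: "maximal_coherent M" and D2M: "D2 \<subseteq> M" and Mh: "prevision M h = prevision D2 h"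
    using exists_maximal_coherent_prevision[OF D2 h] by blast
  interpret maximal_coherent M by (fact M)
  obtain V where V: "V \<in> insert (\<lambda>_. 0) D1"
    and le: "\<And>x1. V x1 \<le> prevision M (\<lambda>x2. f x1 - a + g x1 * h x2)"
    using prod_D_section_prevision[OF D1 M D2M \<psi>] by (auto simp: algebra_simps)
  have section_prevision: "prevision M (\<lambda>x2. f x1 - a + g x1 * h x2) = f x1 + g x1 * prevision D2 h - a" for x1
    using prevision_add[OF gamble_const gamble_cmult[OF h], of "f x1 - a" "g x1"]
    by (simp add: prevision_scale[OF h] prevision_const[OF coherent] Mh)
  have le': "\<epsilon> + V x1 \<le> f x1 + g x1 * prevision D2 h - (a - \<epsilon>)" for x1
    using le[of x1] section_prevision[of x1] by linarith
  have "(\<lambda>x1. \<epsilon> + V x1) \<in> D1"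
    by (rule additive_cone_add_insert_zero[OF coherent_D_additive_cone[OF D1] coherent_D_const[OF D1 \<epsilon>] V])
  then show ?thesis
    by (rule coherent_D_mono[OF D1 _ _ le']) (intro gamble_diff gamble_add gamble_mult f g gamble_const)
qed

lemma simple_meas_gamble:
  assumes "simple_meas \<B> s"
  shows "gamble s"
proof -
  obtain n c B where "s = (\<lambda>x. c 0 + (\<Sum>k=1..(n::nat). c k * indicator (B k) x))"
    using assms unfolding simple_meas_def by blast
  then show ?thesis by (simp add: gamble_add gamble_sum gamble_cmult)
qed

lemma meas_gamble: "meas \<B> g \<Longrightarrow> gamble g"
  by (simp add: meas_def nonneg_gambles_def)

lemma meas_uniform_approx:
  assumes g: "meas \<B> g" and \<eta>: "\<eta> > 0"
  obtains s where "simple_meas \<B> s" "\<And>x. \<bar>g x - s x\<bar> < \<eta>"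
proof -
  obtain gs where gs: "\<And>n. simple_meas \<B> (gs n)" and lim: "(\<lambda>n. SUP x. \<bar>g x - gs n x\<bar>) \<longlonglongrightarrow> 0"
    using g unfolding meas_def by blast
  obtain n where n: "(SUP x. \<bar>g x - gs n x\<bar>) < \<eta>"
    using order_tendstoD(2)[OF lim \<eta>] by (auto simp: eventually_sequentially)
  have "gamble (\<lambda>x. g x - gs n x)" using gamble_diff[OF meas_gamble[OF g] simple_meas_gamble[OF gs]] .
  then have "bdd_above (range (\<lambda>x. \<bar>g x - gs n x\<bar>))"
    by (auto simp: bdd_above_def gamble_def)
  then have "\<bar>g x - gs n x\<bar> < \<eta>" for x using n by (meson cSUP_upper UNIV_I order.strict_trans1)
  with gs that show ?thesis by blast
qed

lemma simple_meas_tensor_in_prod_D: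
  assumes s: "simple_meas \<B>1 s" and w: "w \<in> D2"
  shows "(\<lambda>(x1, x2). s x1 * w x2) \<in> insert (\<lambda>_. 0) (prod_D D1 \<B>1 D2 \<B>2)"
proof -
  obtain n :: nat and c B where c: "\<forall>k \<le> n. c k \<ge> 0" and B: "\<forall>k \<in> {1..n}. B k \<in> \<B>1"
    and s_eq: "s = (\<lambda>x. c 0 + (\<Sum>k=1..n. c k * indicator (B k) x))"
    using s unfolding simple_meas_def by blast
  have summand: "(\<lambda>p. c k * (\<lambda>(x1, x2). w x2 * indicator B' x1) p) \<in> insert (\<lambda>_. 0) (prod_D D1 \<B>1 D2 \<B>2)"
    if "k \<le> n" "B' \<in> \<B>1 \<union> {UNIV}" for k B'
    using that c by (intro insert_zero_scale[OF additive_cone_prod_D] insertI2 D2_times_indicator_in_prod_D w) auto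
  have "(\<lambda>p. \<Sum>k=1..n. c k * (\<lambda>(x1, x2). w x2 * indicator (B k) x1) p) \<in> insert (\<lambda>_. 0) (prod_D D1 \<B>1 D2 \<B>2)"
    using B by (intro insert_zero_sum[OF additive_cone_prod_D] summand) auto
  with summand[of 0 UNIV]
  have "(\<lambda>p. c 0 * (\<lambda>(x1, x2). w x2 * indicator UNIV x1) p
      + (\<Sum>k=1..n. c k * (\<lambda>(x1, x2). w x2 * indicator (B k) x1) p)) \<in> insert (\<lambda>_. 0) (prod_D D1 \<B>1 D2 \<B>2)"
    by (intro additive_cone_add[OF additive_cone_insert_zero[OF additive_cone_prod_D]]) auto
  moreover have "(\<lambda>p. c 0 * (\<lambda>(x1, x2). w x2 * indicator UNIV x1) p
      + (\<Sum>k=1..n. c k * (\<lambda>(x1, x2). w x2 * indicator (B k) x1) p)) = (\<lambda>(x1, x2). s x1 * w x2)"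
    unfolding s_eq by (auto simp: fun_eq_iff distrib_left sum_distrib_left mult_ac)
  ultimately show ?thesis by simp
qed

lemma prod_D_ge_marginal:
  assumes f: "gamble f" and h: "gamble h" and g: "meas \<B>1 g"
    and below: "\<And>\<nu>. \<nu> < e \<Longrightarrow> (\<lambda>x. h x - \<nu>) \<in> D2"
    and a: "(\<lambda>x1. f x1 + g x1 * e - a) \<in> D1" and \<epsilon>: "\<epsilon> > 0"
  shows "(\<lambda>p. (\<lambda>(x1, x2). f x1 + g x1 * h x2) p - (a - \<epsilon>)) \<in> prod_D D1 \<B>1 D2 \<B>2"
proof -
  have "gamble g" using g by (rule meas_gamble)
  obtain G where G: "\<And>x. \<bar>g x\<bar> \<le> G" "G \<ge> 0" using gamble_bound[OF \<open>gamble g\<close>] by blast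
  obtain K where K: "\<And>x. \<bar>h x - e\<bar> \<le> K" "K \<ge> 0" using gamble_bound[OF gamble_diff[OF h gamble_const]] by blast
  define \<eta> where "\<eta> = \<epsilon> / (2 * (K + 1))"
  have \<eta>: "\<eta> > 0" "\<eta> * K \<le> \<epsilon> / 2"
    using \<epsilon> K(2) unfolding \<eta>_def by (auto simp: field_simps)
  obtain s where s: "simple_meas \<B>1 s" and close: "\<And>x. \<bar>g x - s x\<bar> < \<eta>"
    using meas_uniform_approx[OF g \<eta>(1)] by blast
  define \<delta> where "\<delta> = \<epsilon> / (2 * (G + \<eta>))"
  have \<delta>: "\<delta> > 0" "(G + \<eta>) * \<delta> = \<epsilon> / 2"
    using \<epsilon> G(2) \<eta>(1) unfolding \<delta>_def by (auto simp: field_simps)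
  \<comment> \<open>the gamble is \<open>L + T\<close> plus the non-negative remainder \<open>R\<close> below\<close>
  define L where "L = (\<lambda>(x1 :: 'a, x2 :: 'b). f x1 + g x1 * e - a)"
  define T where "T = (\<lambda>(x1, x2). s x1 * (h x2 - (e - \<delta>)))"
  have "L \<in> prod_D D1 \<B>1 D2 \<B>2"
    using D1_times_indicator_in_prod_D[OF a, of UNIV \<B>2 \<B>1 D2] unfolding L_def by simp
  moreover have "T \<in> insert (\<lambda>_. 0) (prod_D D1 \<B>1 D2 \<B>2)"
    unfolding T_def using \<delta>(1) by (intro simple_meas_tensor_in_prod_D s below) simp
  ultimately have LT: "(\<lambda>p. L p + T p) \<in> prod_D D1 \<B>1 D2 \<B>2"
    by (rule additive_cone_add_insert_zero[OF additive_cone_prod_D])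
  define R where "R = (\<lambda>p. (g (fst p) - s (fst p)) * (h (snd p) - e) + (\<epsilon> - s (fst p) * \<delta>))"
  have R_eq: "(\<lambda>p. (\<lambda>(x1, x2). f x1 + g x1 * h x2) p - (a - \<epsilon>) - (L p + T p)) = R"
    unfolding R_def L_def T_def by (simp add: fun_eq_iff algebra_simps)
  have "gamble (\<lambda>p. g (fst p))" "gamble (\<lambda>p. s (fst p))" "gamble (\<lambda>p. h (snd p))"
    using \<open>gamble g\<close> simple_meas_gamble[OF s] h by (auto intro: gamble_comp)
  then have "gamble R" unfolding R_def by (intro gamble_add gamble_mult gamble_diff gamble_const)
  then have "gamble (\<lambda>p. (\<lambda>(x1, x2). f x1 + g x1 * h x2) p - (a - \<epsilon>) - (L p + T p))"
    unfolding R_eq .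
  moreover have "L p + T p \<le> (\<lambda>(x1, x2). f x1 + g x1 * h x2) p - (a - \<epsilon>)" for p
  proof -
    obtain x1 x2 where p: "p = (x1, x2)" by (cases p)
    have "\<bar>(g x1 - s x1) * (h x2 - e)\<bar> \<le> \<eta> * K"
      unfolding abs_mult using close[of x1] K by (intro mult_mono) auto
    moreover have "s x1 * \<delta> \<le> (G + \<eta>) * \<delta>"
      using close[of x1] G(1)[of x1] \<delta>(1) by (intro mult_right_mono) auto
    ultimately have "R p \<ge> 0" using \<eta>(2) \<delta>(2) unfolding p R_def by (simp add: abs_le_iff)
    then show ?thesis using fun_cong[OF R_eq, of p] by simp
  qed
  ultimately show ?thesis unfolding prod_D_Ext by (rule Ext_mono[OF LT[unfolded prod_D_Ext]])
qed

lemma lowprev_prod_D_factor: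
  assumes D1: "coherent_D D1" and D2: "coherent_D D2" and f: "gamble f" and h: "gamble h"
    and g: "meas \<B>1 g"
  shows "lowprev_D (prod_D D1 \<B>1 D2 \<B>2) (\<lambda>(x1, x2). f x1 + g x1 * h x2) UNIV
       = lowprev_D D1 (\<lambda>x1. f x1 + g x1 * prevision D2 h) UNIV"
  unfolding lowprev_D_UNIV
proof (rule antisym; rule Sup_ereal_le_eps; clarsimp)
  fix a \<epsilon> :: real assume "\<epsilon> > 0"
  show "(\<lambda>x1. f x1 + g x1 * prevision D2 h - (a - \<epsilon>)) \<in> D1"
    if "(\<lambda>p. (\<lambda>(x1, x2). f x1 + g x1 * h x2) p - a) \<in> prod_D D1 \<B>1 D2 \<B>2"
    using prod_D_le_marginal[OF D1 D2 f meas_gamble[OF g] h that \<open>\<epsilon> > 0\<close>] .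
  show "(\<lambda>p. (\<lambda>(x1, x2). f x1 + g x1 * h x2) p - (a - \<epsilon>)) \<in> prod_D D1 \<B>1 D2 \<B>2"
    if "(\<lambda>x1. f x1 + g x1 * prevision D2 h - a) \<in> D1"
    using prevision_less[OF D2 h] by (rule prod_D_ge_marginal[OF f h g _ that \<open>\<epsilon> > 0\<close>])
qed

theorem theorem21:
  fixes P1 :: "('a \<Rightarrow> real) \<Rightarrow> 'a set \<Rightarrow> ereal" and C1 :: "(('a \<Rightarrow> real) \<times> 'a set) set"
    and P2 :: "('b \<Rightarrow> real) \<Rightarrow> 'b set \<Rightarrow> ereal" and C2 :: "(('b \<Rightarrow> real) \<times> 'b set) set"
    and \<B>1 :: "'a set set" and \<B>2 :: "'b set set"
  assumes "{} \<notin> \<B>1" and "{} \<notin> \<B>2"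
    and "coherent_lp P1 C1" and "coherent_lp P2 C2"
  shows "(\<forall>(f::'a \<Rightarrow> real) (g::'a \<Rightarrow> real) (h::'b \<Rightarrow> real).
            gamble f \<and> gamble h \<and> meas \<B>1 g \<longrightarrow>
            prod_lp P1 C1 \<B>1 P2 C2 \<B>2 (\<lambda>(x1, x2). f x1 + g x1 * h x2) UNIV
            = nat_ext P1 C1 (\<lambda>x1. f x1 + g x1 * real_of_ereal (nat_ext P2 C2 h UNIV)) UNIV)
       \<and> (\<forall>(f::'b \<Rightarrow> real) (g::'b \<Rightarrow> real) (h::'a \<Rightarrow> real).
            gamble f \<and> gamble h \<and> meas \<B>2 g \<longrightarrow>
            prod_lp P1 C1 \<B>1 P2 C2 \<B>2 (\<lambda>(x1, x2). f x2 + g x2 * h x1) UNIV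
            = nat_ext P2 C2 (\<lambda>x2. f x2 + g x2 * real_of_ereal (nat_ext P1 C1 h UNIV)) UNIV)"
proof -
  have D1: "coherent_D (ext_lp P1 C1)" and D2: "coherent_D (ext_lp P2 C2)"
    using assms(3,4) by (auto intro: ext_lp_coherent)
  note defs = prod_lp_def nat_ext_def prevision_def[symmetric]
  show ?thesis
  proof (intro conjI allI impI; elim conjE)
    fix f g :: "'a \<Rightarrow> real" and h :: "'b \<Rightarrow> real"
    assume "gamble f" "gamble h" "meas \<B>1 g"
    then show "prod_lp P1 C1 \<B>1 P2 C2 \<B>2 (\<lambda>(x1, x2). f x1 + g x1 * h x2) UNIV
        = nat_ext P1 C1 (\<lambda>x1. f x1 + g x1 * real_of_ereal (nat_ext P2 C2 h UNIV)) UNIV"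
      unfolding defs by (rule lowprev_prod_D_factor[OF D1 D2])
  next
    fix f g :: "'b \<Rightarrow> real" and h :: "'a \<Rightarrow> real"
    assume "gamble f" "gamble h" "meas \<B>2 g"
    have "(\<lambda>(x1, x2). f x2 + g x2 * h x1) \<circ> prod.swap = (\<lambda>(y1, y2). f y1 + g y1 * h y2)"
      by (simp add: fun_eq_iff)
    then show "prod_lp P1 C1 \<B>1 P2 C2 \<B>2 (\<lambda>(x1, x2). f x2 + g x2 * h x1) UNIV
        = nat_ext P2 C2 (\<lambda>x2. f x2 + g x2 * real_of_ereal (nat_ext P1 C1 h UNIV)) UNIV"
      unfolding defs lowprev_prod_D_swap[of _ \<B>1 _ \<B>2]
      using lowprev_prod_D_factor[OF D2 D1 \<open>gamble f\<close> \<open>gamble h\<close> \<open>meas \<B>2 g\<close>] by simp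
  qed
qed

end
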